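(* Let $X$ be a real Banach space, $K$ a compact Hausdorff space and $T\colon X\to C(K)$ a U-embedding. Let $F_T\colon K\to X^*$ be given by $\langle x,F_T(k)\rangle=(Tx)(k)$, let $A_0:=F_T^{-1}(\mathrm{Ext}\,B_{X^*})$, and let $E$ be the weak$^*$ closure of $F_T(A_0)=\mathrm{Ext}\,B_{X^*}\cap F_T(K)$ (equivalently $E=F_T(\overline{A_0})$). Then $E$ is a proper U-suitable set for $X$.
   Context: For a linear isometry $T\colon X\to Y$ between Banach spaces, $T$ is a U-embedding if every $x^*\in X^*$ has a unique $y^*\in Y^*$ with $T^*(y^* )=x^*$ and $\|y^*\|=\|x^*\|$. For $x\in S_X$ (unit sphere), $\mathfrak F(x):=\{x^*\in S_{X^*}:\langle x,x^*\rangle=1\}$ is the face of $B_{X^*}$ determined by $x$. A weak$^*$-closed set $E\subset B_{X^*}$ is U-suitable if (i) $E\cap(-E)\cap S_{X^*}=\emptyset$ and (ii) $E\cup(-E)=\overline{\mathrm{Ext}\,B_{X^*}}^{w^*}$. It is a proper U-suitable set if moreover (iii) for every $x\in S_X$, $E\cap\mathfrak F(x)=E\cap\overline{\mathrm{Ext}\,\mathfrak F(x)}^{w^*}$. *)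

theory Defs
  imports "HOL-Analysis.Analysis"
begin


definition weak_star :: "('a::real_normed_vector \<Rightarrow>\<^sub>L real) topology" where
  "weak_star = topology_generated_by
     {{f. blinfun_apply f x \<in> U} | x U. open (U :: real set)}"

definition ext_set :: "'v::real_vector set \<Rightarrow> 'v set" where
  "ext_set S = {x. x extreme_point_of S}"

definition dual_ball :: "('a::real_normed_vector \<Rightarrow>\<^sub>L real) set" where
  "dual_ball = cball 0 1"

definition face :: "'a::real_normed_vector \<Rightarrow> ('a \<Rightarrow>\<^sub>L real) set" where
  "face x = {f. norm f = 1 \<and> blinfun_apply f x = 1}"

definition U_embedding :: "('a::real_normed_vector \<Rightarrow> 'b::real_normed_vector) \<Rightarrow> bool" where
  "U_embedding T \<longleftrightarrow> linear T \<and> (\<forall>x. norm (T x) = norm x) \<and>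
     (\<forall>xs :: 'a \<Rightarrow>\<^sub>L real. \<exists>!ys :: 'b \<Rightarrow>\<^sub>L real.
        (\<forall>x. blinfun_apply ys (T x) = blinfun_apply xs x) \<and> norm ys = norm xs)"

definition U_suitable :: "('a::real_normed_vector \<Rightarrow>\<^sub>L real) set \<Rightarrow> bool" where
  "U_suitable E \<longleftrightarrow> E \<subseteq> dual_ball \<and> closedin weak_star E \<and>
     E \<inter> uminus ` E \<inter> sphere 0 1 = {} \<and>
     E \<union> uminus ` E = weak_star closure_of (ext_set dual_ball)"

definition proper_U_suitable :: "('a::real_normed_vector \<Rightarrow>\<^sub>L real) set \<Rightarrow> bool" where
  "proper_U_suitable E \<longleftrightarrow> U_suitable E \<and>
     (\<forall>x. norm x = 1 \<longrightarrow>
        E \<inter> face x = E \<inter> (weak_star closure_of (ext_set (face x))))"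

definition F_T :: "('a::real_normed_vector \<Rightarrow> ('k::topological_space \<Rightarrow>\<^sub>C real)) \<Rightarrow> 'k \<Rightarrow> ('a \<Rightarrow>\<^sub>L real)" where
  "F_T T k = Blinfun (\<lambda>x. apply_bcontfun (T x) k)"

end

theory Submission
  imports Defs
begin

text \<open>
  Along a U-embedding \<open>T : X \<rightarrow> C(K)\<close> every functional on \<open>X\<close> has a unique norm-preserving
  extension to \<open>C(K)\<close>, and \<open>F_T k\<close> is the restriction of the point evaluation \<open>\<delta>\<^sub>k\<close>.
  Let \<open>e\<close> be an extreme point of the dual ball with extension \<open>\<mu>\<close>. For \<open>0 \<le> \<psi> \<le> 1\<close> the
  splitting \<open>\<mu> = \<psi>\<mu> + (1 - \<psi>)\<mu>\<close> restricts to a splitting of \<open>e\<close> whose norms add up to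
  \<open>norm e\<close>, so extremality of \<open>e\<close> and uniqueness of the extension make \<open>\<psi>\<mu>\<close> a multiple
  of \<open>\<mu>\<close>. Hence \<open>\<mu>\<close> is multiplicative, and by compactness of \<open>K\<close> it is \<open>\<plusminus>\<delta>\<^sub>k\<close>;
  thus \<open>e = \<plusminus>F_T k\<close>, which identifies \<open>E \<union> -E\<close> with the weak* closure of the extreme points.
  Conversely, \<open>\<delta>\<^sub>k\<close> is an extreme point of the dual ball of \<open>C(K)\<close> and the unique extension
  of \<open>F_T k\<close> whenever \<open>norm (F_T k) = 1\<close>. This rules out \<open>F_T k = - F_T k'\<close> on the sphere,
  and makes \<open>F_T k\<close> an extreme point of every face of the dual ball containing it.
\<close>

section \<open>Weak* topology\<close>

lemma topspace_weak_star [simp]: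
  "topspace (weak_star :: ('a::real_normed_vector \<Rightarrow>\<^sub>L real) topology) = UNIV"
  unfolding weak_star_def by (auto intro!: exI[of _ "{f. blinfun_apply f 0 \<in> UNIV}"])

lemma openin_weak_star_eval:
  "open U \<Longrightarrow> openin weak_star {f::'a::real_normed_vector \<Rightarrow>\<^sub>L real. blinfun_apply f x \<in> U}"
  unfolding weak_star_def by (rule topology_generated_by_Basis) blast

lemma continuous_map_weak_star_eval:
  "continuous_map (weak_star :: ('a::real_normed_vector \<Rightarrow>\<^sub>L real) topology) euclideanreal
     (\<lambda>f. blinfun_apply f x)"
  unfolding continuous_map_def by (auto simp: openin_weak_star_eval vimage_def)

lemma continuous_map_into_weak_star:
  assumes "\<And>x. continuous_map X euclideanreal (\<lambda>t. blinfun_apply (g t) x)"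
  shows "continuous_map X (weak_star :: ('a::real_normed_vector \<Rightarrow>\<^sub>L real) topology) g"
  unfolding weak_star_def
proof (rule continuous_on_generated_topo)
  fix U assume "U \<in> {{f::'a \<Rightarrow>\<^sub>L real. blinfun_apply f x \<in> U} | x U. open (U :: real set)}"
  then obtain x V where U: "U = {f. blinfun_apply f x \<in> V}" "open V" by blast
  have "g -` U \<inter> topspace X = {t \<in> topspace X. blinfun_apply (g t) x \<in> V}"
    using U by auto
  then show "openin X (g -` U \<inter> topspace X)"
    using openin_continuous_map_preimage[OF assms[of x], of V] U by simp
qed (auto intro!: exI[of _ "{f. blinfun_apply f 0 \<in> UNIV}"])

lemma Hausdorff_space_weak_star:
  "Hausdorff_space (weak_star :: ('a::real_normed_vector \<Rightarrow>\<^sub>L real) topology)"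
  unfolding Hausdorff_space_def
proof (intro allI impI)
  fix f g :: "'a \<Rightarrow>\<^sub>L real"
  assume "f \<in> topspace weak_star \<and> g \<in> topspace weak_star \<and> f \<noteq> g"
  then obtain x where x: "blinfun_apply f x \<noteq> blinfun_apply g x"
    by (meson blinfun_eqI)
  define d where "d = dist (blinfun_apply f x) (blinfun_apply g x) / 2"
  have "d > 0" using x by (simp add: d_def)
  moreover have "disjnt (ball (blinfun_apply f x) d) (ball (blinfun_apply g x) d)"
    unfolding disjnt_def by (rule disjoint_ballI) (simp add: d_def)
  ultimately show "\<exists>U V. openin weak_star U \<and> openin weak_star V \<and> f \<in> U \<and> g \<in> V \<and> disjnt U V"
    by (intro exI[of _ "{h. blinfun_apply h x \<in> ball (blinfun_apply f x) d}"]
        exI[of _ "{h. blinfun_apply h x \<in> ball (blinfun_apply g x) d}"] conjI openin_weak_star_eval)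
      (auto simp: disjnt_iff)
qed

lemma homeomorphic_map_weak_star_uminus:
  "homeomorphic_map (weak_star :: ('a::real_normed_vector \<Rightarrow>\<^sub>L real) topology) weak_star uminus"
  by (intro homeomorphic_map_involution continuous_map_into_weak_star)
    (simp_all add: blinfun.minus_left continuous_map_minus continuous_map_weak_star_eval)

lemma closedin_weak_star_eval_eq:
  "closedin (weak_star :: ('a::real_normed_vector \<Rightarrow>\<^sub>L real) topology) {f. blinfun_apply f x = c}"
  using closedin_continuous_map_preimage[OF continuous_map_weak_star_eval[of x], of "{c}"] by simp

section \<open>Extreme points of the unit ball\<close>

lemma extreme_point_of_cball_uminus:
  assumes "e extreme_point_of cball (0::'a::real_normed_vector) 1"
  shows "(- e) extreme_point_of cball 0 1"
  unfolding extreme_point_of_def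
proof (intro conjI ballI)
  show "- e \<in> cball 0 1" using assms by (simp add: extreme_point_of_def)
  fix a b :: 'a assume ab: "a \<in> cball 0 1" "b \<in> cball 0 1"
  show "- e \<notin> open_segment a b"
  proof
    assume "- e \<in> open_segment a b"
    then have "e \<in> open_segment (- a) (- b)"
      unfolding in_segment by (auto simp: algebra_simps)
    with ab assms show False by (auto simp: extreme_point_of_def)
  qed
qed

lemma extreme_point_of_cball_norm_eq_1:
  fixes e v :: "'a::real_normed_vector"
  assumes e: "e extreme_point_of cball 0 1" and "v \<noteq> 0"
  shows "norm e = 1"
proof (rule ccontr)
  assume "norm e \<noteq> 1"
  moreover have "norm e \<le> 1" using e by (simp add: extreme_point_of_def)
  ultimately have less: "norm e < 1" by simp
  \<comment> \<open>the segment from \<open>e - w\<close> to \<open>e + w\<close> with \<open>norm w = 1 - norm e\<close> stays in the ball\<close>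
  define w where "w = (1 - norm e) *\<^sub>R (v /\<^sub>R norm v)"
  have norm_w: "norm w = 1 - norm e" using less \<open>v \<noteq> 0\<close> by (simp add: w_def)
  have "e + w \<in> cball 0 1" "e - w \<in> cball 0 1"
    using norm_triangle_ineq[of e w] norm_triangle_ineq4[of e w] norm_w by auto
  moreover have "e \<in> open_segment (e + w) (e - w)"
  proof -
    have "w \<noteq> 0" using norm_w less by auto
    then have "e + w \<noteq> e - w" by (simp add: eq_neg_iff_add_eq_0 scaleR_2[symmetric])
    then show ?thesis
      using midpoint_in_open_segment[of "e + w" "e - w"] by (simp add: midpoint_def scaleR_2[symmetric])
  qed
  ultimately show False using e by (auto simp: extreme_point_of_def)
qed

lemma extreme_point_of_cball_decompose:
  fixes e a b :: "'a::real_normed_vector"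
  assumes e: "e extreme_point_of cball 0 1" "norm e = 1"
    and sum: "e = a + b" and norms: "norm a + norm b \<le> 1"
  shows "a = norm a *\<^sub>R e"
proof (cases "a = 0 \<or> b = 0")
  case True
  then show ?thesis using sum e(2) by auto
next
  case False
  then have pos: "norm a > 0" "norm b > 0" by auto
  have norm_sum: "norm a + norm b = 1" using norm_triangle_ineq[of a b] sum e(2) norms by simp
  define a' b' where "a' = a /\<^sub>R norm a" and "b' = b /\<^sub>R norm b"
  have e_comb: "e = (1 - norm b) *\<^sub>R a' + norm b *\<^sub>R b'"
  proof -
    have "1 - norm b = norm a" using norm_sum by simp
    then show ?thesis using pos sum by (simp add: a'_def b'_def)
  qed
  have "a' \<in> cball 0 1" "b' \<in> cball 0 1" using pos by (simp_all add: a'_def b'_def)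
  moreover have "0 < norm b" "norm b < 1" using pos norm_sum by linarith+
  ultimately have "a' = b'"
    using e(1) e_comb unfolding extreme_point_of_def in_segment(2) by blast
  then have "e = a'" using e_comb by (simp add: algebra_simps)
  then show ?thesis using pos by (simp add: a'_def)
qed

section \<open>Norm-preserving extensions along a U-embedding\<close>

lemma abs_blinfun_apply_le_norm: "norm \<nu> \<le> 1 \<Longrightarrow> \<bar>blinfun_apply \<nu> g\<bar> \<le> norm g"
  using norm_blinfun[of \<nu> g] mult_right_mono[of "norm \<nu>" 1 "norm g"] by simp

lemma norm_blinfun_le_if_sphere_bound:
  fixes f :: "'a::real_normed_vector \<Rightarrow>\<^sub>L real"
  assumes bound: "\<And>x. norm x = 1 \<Longrightarrow> blinfun_apply f x \<le> c" and "0 \<le> c"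
  shows "norm f \<le> c"
proof (rule norm_blinfun_bound[OF \<open>0 \<le> c\<close>])
  fix x :: 'a
  show "norm (blinfun_apply f x) \<le> c * norm x"
  proof (cases "x = 0")
    case False
    define y where "y = x /\<^sub>R norm x"
    have "norm y = 1" "norm (- y) = 1" using False by (simp_all add: y_def)
    then have "\<bar>blinfun_apply f y\<bar> \<le> c"
      using bound[of y] bound[of "- y"] by (simp add: blinfun.minus_right)
    then have "norm x * \<bar>blinfun_apply f y\<bar> \<le> norm x * c" by (simp add: mult_left_mono)
    moreover have "blinfun_apply f x = norm x * blinfun_apply f y"
      using False by (simp add: y_def blinfun.scaleR_right)
    ultimately show ?thesis by (simp add: abs_mult mult.commute)
  qed simp
qed

definition dual_map :: "('a::real_normed_vector \<Rightarrow> 'b::real_normed_vector) \<Rightarrow> ('b \<Rightarrow>\<^sub>L real) \<Rightarrow> ('a \<Rightarrow>\<^sub>L real)"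
  where "dual_map T \<nu> = Blinfun (\<lambda>x. blinfun_apply \<nu> (T x))"

lemma dual_map_apply:
  "bounded_linear T \<Longrightarrow> blinfun_apply (dual_map T \<nu>) x = blinfun_apply \<nu> (T x)"
  unfolding dual_map_def
  by (simp add: bounded_linear_Blinfun_apply bounded_linear_compose[OF blinfun.bounded_linear_right])

lemma dual_map_add:
  "bounded_linear T \<Longrightarrow> dual_map T (\<mu> + \<nu>) = dual_map T \<mu> + dual_map T \<nu>"
  by (rule blinfun_eqI) (simp add: dual_map_apply blinfun.add_left)

lemma dual_map_scaleR:
  "bounded_linear T \<Longrightarrow> dual_map T (c *\<^sub>R \<nu>) = c *\<^sub>R dual_map T \<nu>"
  by (rule blinfun_eqI) (simp add: dual_map_apply scaleR_blinfun.rep_eq)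

lemma dual_map_uminus:
  "bounded_linear T \<Longrightarrow> dual_map T (- \<nu>) = - dual_map T \<nu>"
  by (rule blinfun_eqI) (simp add: dual_map_apply blinfun.minus_left)

lemma norm_dual_map_le:
  assumes "bounded_linear T" and "\<And>x. norm (T x) \<le> norm x"
  shows "norm (dual_map T \<nu>) \<le> norm \<nu>"
proof (rule norm_blinfun_bound)
  show "norm (blinfun_apply (dual_map T \<nu>) x) \<le> norm \<nu> * norm x" for x
    using norm_blinfun[of \<nu> "T x"] mult_left_mono[OF assms(2)[of x], of "norm \<nu>"]
    by (simp add: dual_map_apply[OF assms(1)])
qed simp

lemma U_embedding_bounded_linear: "U_embedding T \<Longrightarrow> bounded_linear T"
  unfolding U_embedding_def
  by (intro bounded_linear_intro[where K=1]) (auto simp: linear_add linear_scale)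

lemma U_embedding_norm: "U_embedding T \<Longrightarrow> norm (T x) = norm x"
  by (simp add: U_embedding_def)

lemma U_embedding_ex1_extension:
  assumes "U_embedding T"
  shows "\<exists>!\<nu>. dual_map T \<nu> = f \<and> norm \<nu> = norm f"
proof -
  have "dual_map T \<nu> = f \<longleftrightarrow> (\<forall>x. blinfun_apply \<nu> (T x) = blinfun_apply f x)" for \<nu>
    by (auto intro: blinfun_eqI simp: dual_map_apply[OF U_embedding_bounded_linear[OF assms]])
  then show ?thesis using assms by (simp add: U_embedding_def)
qed

definition U_extension :: "('a::real_normed_vector \<Rightarrow> 'b::real_normed_vector) \<Rightarrow> ('a \<Rightarrow>\<^sub>L real) \<Rightarrow> ('b \<Rightarrow>\<^sub>L real)"
  where "U_extension T f = (THE \<nu>. dual_map T \<nu> = f \<and> norm \<nu> = norm f)"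

lemma
  assumes "U_embedding T"
  shows dual_map_U_extension: "dual_map T (U_extension T f) = f"
    and norm_U_extension: "norm (U_extension T f) = norm f"
  using theI'[OF U_embedding_ex1_extension[OF assms, of f]] by (simp_all add: U_extension_def)

lemma U_extension_unique:
  assumes UE: "U_embedding T" and "dual_map T \<nu> = f" and "norm \<nu> \<le> norm f"
  shows "\<nu> = U_extension T f"
proof -
  have "norm f \<le> norm \<nu>"
    using norm_dual_map_le[OF U_embedding_bounded_linear[OF UE]] U_embedding_norm[OF UE] assms(2)
    by (metis order_refl)
  then show ?thesis
    using U_embedding_ex1_extension[OF UE, of f] assms dual_map_U_extension[OF UE] norm_U_extension[OF UE]
    by (metis order_antisym)
qed

lemma U_extension_scaleR:
  assumes "U_embedding T"
  shows "U_extension T (c *\<^sub>R f) = c *\<^sub>R U_extension T f"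
  using assms by (intro U_extension_unique[symmetric])
    (simp_all add: dual_map_scaleR U_embedding_bounded_linear dual_map_U_extension norm_U_extension)

section \<open>Functionals on bounded continuous functions\<close>

lemma norm_const_bcontfun:
  "norm (const_bcontfun c :: 'k::topological_space \<Rightarrow>\<^sub>C 'b::real_normed_vector) = norm c"
proof (rule antisym)
  show "norm (const_bcontfun c :: 'k \<Rightarrow>\<^sub>C 'b) \<le> norm c" by (rule norm_bound) simp
  show "norm c \<le> norm (const_bcontfun c :: 'k \<Rightarrow>\<^sub>C 'b)"
    using norm_bounded[of "const_bcontfun c :: 'k \<Rightarrow>\<^sub>C 'b" undefined] by simp
qed

lemma abs_apply_bcontfun_le: "\<bar>apply_bcontfun (g :: 'k::topological_space \<Rightarrow>\<^sub>C real) t\<bar> \<le> norm g"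
  using norm_bounded[of g t] by simp

lemma apply_bcontfun_sum: "apply_bcontfun (sum f F) t = (\<Sum>i\<in>F. apply_bcontfun (f i) t)"
  by (induct F rule: infinite_finite_induct) auto

definition point_eval :: "'k::topological_space \<Rightarrow> ('k \<Rightarrow>\<^sub>C real) \<Rightarrow>\<^sub>L real"
  where "point_eval k = Blinfun (\<lambda>g. apply_bcontfun g k)"

lemma point_eval_apply [simp]:
  fixes k :: "'k::topological_space"
  shows "blinfun_apply (point_eval k) g = apply_bcontfun g k"
proof -
  have "bounded_linear (\<lambda>g::'k \<Rightarrow>\<^sub>C real. apply_bcontfun g k)"
    by (rule bounded_linear_intro[where K=1]) (simp_all add: abs_apply_bcontfun_le)
  then show ?thesis by (simp add: point_eval_def bounded_linear_Blinfun_apply)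
qed

lemma norm_point_eval [simp]: "norm (point_eval k) = 1"
proof (rule antisym)
  show "norm (point_eval k) \<le> 1"
    by (rule norm_blinfun_bound) (simp_all add: abs_apply_bcontfun_le)
  show "1 \<le> norm (point_eval k)"
    using norm_blinfun[of "point_eval k" "const_bcontfun 1"] by (simp add: norm_const_bcontfun)
qed

definition bcontfun_mult :: "('k::topological_space \<Rightarrow>\<^sub>C real) \<Rightarrow> ('k \<Rightarrow>\<^sub>C real) \<Rightarrow> ('k \<Rightarrow>\<^sub>C real)"
  where "bcontfun_mult f g = Bcontfun (\<lambda>t. apply_bcontfun f t * apply_bcontfun g t)"

lemma bcontfun_mult_apply [simp]:
  "apply_bcontfun (bcontfun_mult f g) t = apply_bcontfun f t * apply_bcontfun g t"
proof -
  have "(\<lambda>t. apply_bcontfun f t * apply_bcontfun g t) \<in> bcontfun"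
    by (rule bcontfun_normI[where b="norm f * norm g"])
      (auto intro!: continuous_intros simp: abs_mult mult_mono' norm_bounded[of f, simplified]
         norm_bounded[of g, simplified])
  then show ?thesis by (simp add: bcontfun_mult_def Bcontfun_inverse)
qed

lemma bounded_linear_bcontfun_mult: "bounded_linear (bcontfun_mult f)"
proof (rule bounded_linear_intro[where K="norm f"])
  show "norm (bcontfun_mult f g) \<le> norm g * norm f" for g
    by (rule norm_bound)
      (simp add: abs_mult mult_mono' norm_bounded[of f, simplified] norm_bounded[of g, simplified] mult.commute)
qed (auto intro!: bcontfun_eqI simp: algebra_simps)

lemma bcontfun_mult_inverse_exists:
  fixes g :: "'k::topological_space \<Rightarrow>\<^sub>C real"
  assumes "compact (UNIV :: 'k set)" and nonzero: "\<And>t. apply_bcontfun g t \<noteq> 0"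
  shows "\<exists>h. bcontfun_mult g h = const_bcontfun 1"
proof -
  have cont: "continuous_on UNIV (\<lambda>t. 1 / apply_bcontfun g t)"
    using nonzero by (intro continuous_intros) auto
  then have "(\<lambda>t. 1 / apply_bcontfun g t) \<in> bcontfun"
    using compact_continuous_image[OF cont assms(1)] by (simp add: bcontfun_def compact_imp_bounded)
  then have "bcontfun_mult g (Bcontfun (\<lambda>t. 1 / apply_bcontfun g t)) = const_bcontfun 1"
    using nonzero by (intro bcontfun_eqI) (simp add: Bcontfun_inverse)
  then show ?thesis ..
qed

definition bcontfun_pos :: "('k::topological_space \<Rightarrow>\<^sub>C real) \<Rightarrow> ('k \<Rightarrow>\<^sub>C real)"
  where "bcontfun_pos f = Bcontfun (\<lambda>t. max (apply_bcontfun f t) 0)"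

lemma bcontfun_pos_apply [simp]: "apply_bcontfun (bcontfun_pos f) t = max (apply_bcontfun f t) 0"
proof -
  have "(\<lambda>t. max (apply_bcontfun f t) 0) \<in> bcontfun"
  proof (rule bcontfun_normI[where b="norm f"])
    show "continuous_on UNIV (\<lambda>t. max (apply_bcontfun f t) 0)" by (intro continuous_intros) auto
    show "norm (max (apply_bcontfun f t) 0) \<le> norm f" for t
      using abs_apply_bcontfun_le[of f t] by (auto simp: max_def)
  qed
  then show ?thesis by (simp add: bcontfun_pos_def Bcontfun_inverse)
qed

definition mult_functional ::
    "(('k::topological_space \<Rightarrow>\<^sub>C real) \<Rightarrow>\<^sub>L real) \<Rightarrow> ('k \<Rightarrow>\<^sub>C real) \<Rightarrow> (('k \<Rightarrow>\<^sub>C real) \<Rightarrow>\<^sub>L real)"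
  where "mult_functional \<mu> \<psi> = Blinfun (\<lambda>\<phi>. blinfun_apply \<mu> (bcontfun_mult \<psi> \<phi>))"

lemma mult_functional_apply [simp]:
  "blinfun_apply (mult_functional \<mu> \<psi>) \<phi> = blinfun_apply \<mu> (bcontfun_mult \<psi> \<phi>)"
  unfolding mult_functional_def
  by (simp add: bounded_linear_Blinfun_apply
      bounded_linear_compose[OF blinfun.bounded_linear_right bounded_linear_bcontfun_mult])

lemma mult_functional_add:
  "mult_functional \<mu> (\<psi>1 + \<psi>2) = mult_functional \<mu> \<psi>1 + mult_functional \<mu> \<psi>2"
proof (rule blinfun_eqI)
  fix \<phi>
  have "bcontfun_mult (\<psi>1 + \<psi>2) \<phi> = bcontfun_mult \<psi>1 \<phi> + bcontfun_mult \<psi>2 \<phi>"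
    by (rule bcontfun_eqI) (simp add: algebra_simps)
  then show "blinfun_apply (mult_functional \<mu> (\<psi>1 + \<psi>2)) \<phi> =
      blinfun_apply (mult_functional \<mu> \<psi>1 + mult_functional \<mu> \<psi>2) \<phi>"
    by (simp add: blinfun.add_right plus_blinfun.rep_eq)
qed

lemma mult_functional_scaleR: "mult_functional \<mu> (c *\<^sub>R \<psi>) = c *\<^sub>R mult_functional \<mu> \<psi>"
proof (rule blinfun_eqI)
  fix \<phi>
  have "bcontfun_mult (c *\<^sub>R \<psi>) \<phi> = c *\<^sub>R bcontfun_mult \<psi> \<phi>"
    by (rule bcontfun_eqI) simp
  then show "blinfun_apply (mult_functional \<mu> (c *\<^sub>R \<psi>)) \<phi> = blinfun_apply (c *\<^sub>R mult_functional \<mu> \<psi>) \<phi>"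
    by (simp add: blinfun.scaleR_right scaleR_blinfun.rep_eq)
qed

lemma mult_functional_one [simp]:
  fixes \<mu> :: "('k::topological_space \<Rightarrow>\<^sub>C real) \<Rightarrow>\<^sub>L real"
  shows "mult_functional \<mu> (const_bcontfun 1) = \<mu>"
proof (rule blinfun_eqI)
  fix \<phi> :: "'k \<Rightarrow>\<^sub>C real"
  have "bcontfun_mult (const_bcontfun 1) \<phi> = \<phi>" by (rule bcontfun_eqI) simp
  then show "blinfun_apply (mult_functional \<mu> (const_bcontfun 1)) \<phi> = blinfun_apply \<mu> \<phi>" by simp
qed

lemma norm_mult_functional_complement_le:
  fixes \<mu> :: "('k::topological_space \<Rightarrow>\<^sub>C real) \<Rightarrow>\<^sub>L real"
  assumes \<psi>: "\<And>t. 0 \<le> apply_bcontfun \<psi> t \<and> apply_bcontfun \<psi> t \<le> 1"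
  shows "norm (mult_functional \<mu> \<psi>) + norm (mult_functional \<mu> (const_bcontfun 1 - \<psi>)) \<le> norm \<mu>"
proof -
  let ?M1 = "mult_functional \<mu> \<psi>" and ?M2 = "mult_functional \<mu> (const_bcontfun 1 - \<psi>)"
  have sub: "blinfun_apply ?M1 \<phi>1 + blinfun_apply ?M2 \<phi>2 \<le> norm \<mu>"
    if "norm \<phi>1 \<le> 1" "norm \<phi>2 \<le> 1" for \<phi>1 \<phi>2
  proof -
    let ?\<phi> = "bcontfun_mult \<psi> \<phi>1 + bcontfun_mult (const_bcontfun 1 - \<psi>) \<phi>2"
    have "norm ?\<phi> \<le> 1"
    proof (rule norm_bound)
      fix t
      have "\<bar>apply_bcontfun \<phi>1 t\<bar> \<le> 1" "\<bar>apply_bcontfun \<phi>2 t\<bar> \<le> 1"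
        using abs_apply_bcontfun_le[of \<phi>1 t] abs_apply_bcontfun_le[of \<phi>2 t] that by linarith+
      then show "norm (apply_bcontfun ?\<phi> t) \<le> 1"
        using \<psi>[of t] by simp (smt (verit) mult_left_le right_diff_distrib')
    qed
    then have "blinfun_apply \<mu> ?\<phi> \<le> norm \<mu>"
      using norm_blinfun[of \<mu> ?\<phi>] mult_left_mono[of "norm ?\<phi>" 1 "norm \<mu>"] by simp
    then show ?thesis by (simp add: blinfun.add_right)
  qed
  have norm_M2: "norm ?M2 \<le> norm \<mu>"
    by (rule norm_blinfun_le_if_sphere_bound) (use sub[of 0] in \<open>simp_all add: blinfun.zero_right\<close>)
  have "norm ?M1 \<le> norm \<mu> - norm ?M2"
  proof (rule norm_blinfun_le_if_sphere_bound)
    fix \<phi>1 :: "'k \<Rightarrow>\<^sub>C real" assume \<phi>1: "norm \<phi>1 = 1"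
    have "norm ?M2 \<le> norm \<mu> - blinfun_apply ?M1 \<phi>1"
    proof (rule norm_blinfun_le_if_sphere_bound)
      fix \<phi>2 :: "'k \<Rightarrow>\<^sub>C real" assume "norm \<phi>2 = 1"
      then show "blinfun_apply ?M2 \<phi>2 \<le> norm \<mu> - blinfun_apply ?M1 \<phi>1" using sub[of \<phi>1 \<phi>2] \<phi>1 by simp
    next
      show "0 \<le> norm \<mu> - blinfun_apply ?M1 \<phi>1" using sub[of \<phi>1 0] \<phi>1 by (simp add: blinfun.zero_right)
    qed
    then show "blinfun_apply ?M1 \<phi>1 \<le> norm \<mu> - norm ?M2" by simp
  qed (use norm_M2 in simp)
  then show ?thesis by simp
qed

lemma blinfun_nonneg_if_unital:
  fixes \<nu> :: "('k::topological_space \<Rightarrow>\<^sub>C real) \<Rightarrow>\<^sub>L real"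
  assumes "norm \<nu> \<le> 1" and one: "blinfun_apply \<nu> (const_bcontfun 1) = 1"
    and nonneg: "\<And>t. 0 \<le> apply_bcontfun \<psi> t"
  shows "0 \<le> blinfun_apply \<nu> \<psi>"
proof -
  define \<phi> where "\<phi> = norm \<psi> *\<^sub>R const_bcontfun 1 - \<psi>"
  have "norm \<phi> \<le> norm \<psi>"
    by (rule norm_bound) (use abs_apply_bcontfun_le[of \<psi>] nonneg in \<open>force simp: \<phi>_def\<close>)
  moreover have "blinfun_apply \<nu> \<phi> \<le> norm \<phi>"
    using abs_blinfun_apply_le_norm[OF assms(1), of \<phi>] by simp
  moreover have "blinfun_apply \<nu> \<phi> = norm \<psi> - blinfun_apply \<nu> \<psi>"
    by (simp add: \<phi>_def blinfun.diff_right blinfun.scaleR_right one)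
  ultimately show ?thesis by linarith
qed

lemma eq_point_eval_if_vanishing:
  fixes \<nu> :: "('k::topological_space \<Rightarrow>\<^sub>C real) \<Rightarrow>\<^sub>L real"
  assumes one: "blinfun_apply \<nu> (const_bcontfun 1) = 1"
    and vanish: "\<And>\<psi>. (\<And>t. 0 \<le> apply_bcontfun \<psi> t) \<Longrightarrow> apply_bcontfun \<psi> k = 0 \<Longrightarrow> blinfun_apply \<nu> \<psi> = 0"
  shows "\<nu> = point_eval k"
proof (rule blinfun_eqI)
  fix \<phi> :: "'k \<Rightarrow>\<^sub>C real"
  define c :: "'k \<Rightarrow>\<^sub>C real" where "c = apply_bcontfun \<phi> k *\<^sub>R const_bcontfun 1"
  have split: "\<phi> = c + bcontfun_pos (\<phi> - c) - bcontfun_pos (c - \<phi>)"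
    by (rule bcontfun_eqI) (simp add: c_def max_def)
  have "blinfun_apply \<nu> (bcontfun_pos (\<phi> - c)) = 0" "blinfun_apply \<nu> (bcontfun_pos (c - \<phi>)) = 0"
    by (rule vanish; simp add: c_def)+
  then have "blinfun_apply \<nu> \<phi> = apply_bcontfun \<phi> k"
    by (subst split) (simp add: blinfun.add_right blinfun.diff_right blinfun.scaleR_right one c_def)
  then show "blinfun_apply \<nu> \<phi> = blinfun_apply (point_eval k) \<phi>" by simp
qed

lemma convex_combination_eq_bound:
  fixes u A B c :: real
  assumes "0 < u" "u < 1" "A \<le> c" "B \<le> c" "(1 - u) * A + u * B = c"
  shows "A = c" "B = c"
proof -
  have "(1 - u) * (c - A) + u * (c - B) = 0" using assms(5) by (simp add: algebra_simps)
  moreover have "0 \<le> (1 - u) * (c - A)" "0 \<le> u * (c - B)" using assms by simp_all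
  ultimately have "(1 - u) * (c - A) = 0" "u * (c - B) = 0" by linarith+
  then show "A = c" "B = c" using assms(1,2) by simp_all
qed

lemma eq_point_eval_if_convex_combination:
  fixes \<nu>1 \<nu>2 :: "('k::topological_space \<Rightarrow>\<^sub>C real) \<Rightarrow>\<^sub>L real"
  assumes norms: "norm \<nu>1 \<le> 1" "norm \<nu>2 \<le> 1" and u: "0 < u" "u < 1"
    and comb: "(1 - u) *\<^sub>R \<nu>1 + u *\<^sub>R \<nu>2 = point_eval k"
  shows "\<nu>1 = point_eval k"
proof -
  have comb_apply: "(1 - u) * blinfun_apply \<nu>1 g + u * blinfun_apply \<nu>2 g = apply_bcontfun g k" for g
    using arg_cong[OF comb, of "\<lambda>h. blinfun_apply h g"] by (simp add: plus_blinfun.rep_eq scaleR_blinfun.rep_eq)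
  have "blinfun_apply \<nu>1 (const_bcontfun 1) \<le> 1" "blinfun_apply \<nu>2 (const_bcontfun 1) \<le> 1"
    using abs_blinfun_apply_le_norm[OF norms(1), of "const_bcontfun 1"]
      abs_blinfun_apply_le_norm[OF norms(2), of "const_bcontfun 1"]
    by (simp_all add: norm_const_bcontfun)
  then have one: "blinfun_apply \<nu>1 (const_bcontfun 1) = 1" "blinfun_apply \<nu>2 (const_bcontfun 1) = 1"
    using convex_combination_eq_bound[OF u] comb_apply[of "const_bcontfun 1"] by simp_all
  show ?thesis
  proof (rule eq_point_eval_if_vanishing[OF one(1)])
    fix \<psi> :: "'k \<Rightarrow>\<^sub>C real"
    assume nonneg: "\<And>t. 0 \<le> apply_bcontfun \<psi> t" and "apply_bcontfun \<psi> k = 0"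
    then have comb0: "(1 - u) * - blinfun_apply \<nu>1 \<psi> + u * - blinfun_apply \<nu>2 \<psi> = 0"
      using comb_apply[of \<psi>] by simp
    have "0 \<le> blinfun_apply \<nu>1 \<psi>" "0 \<le> blinfun_apply \<nu>2 \<psi>"
      using blinfun_nonneg_if_unital[OF norms(1) one(1) nonneg] blinfun_nonneg_if_unital[OF norms(2) one(2) nonneg]
      by simp_all
    then have "- blinfun_apply \<nu>1 \<psi> = 0"
      by (intro convex_combination_eq_bound(1)[OF u _ _ comb0]) simp_all
    then show "blinfun_apply \<nu>1 \<psi> = 0" by simp
  qed
qed

lemma point_eval_extreme_point:
  fixes k :: "'k::topological_space"
  shows "point_eval k extreme_point_of cball 0 1"
  unfolding extreme_point_of_def
proof (intro conjI ballI)
  show "point_eval k \<in> cball 0 1" by simp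
  fix \<nu>1 \<nu>2 :: "('k \<Rightarrow>\<^sub>C real) \<Rightarrow>\<^sub>L real"
  assume \<nu>: "\<nu>1 \<in> cball 0 1" "\<nu>2 \<in> cball 0 1"
  show "point_eval k \<notin> open_segment \<nu>1 \<nu>2"
  proof
    assume "point_eval k \<in> open_segment \<nu>1 \<nu>2"
    then obtain u where u: "\<nu>1 \<noteq> \<nu>2" "0 < u" "u < 1" "(1 - u) *\<^sub>R \<nu>1 + u *\<^sub>R \<nu>2 = point_eval k"
      by (auto simp: in_segment)
    then have "(1 - (1 - u)) *\<^sub>R \<nu>2 + (1 - u) *\<^sub>R \<nu>1 = point_eval k" by (simp add: algebra_simps)
    then have "\<nu>2 = point_eval k"
      using eq_point_eval_if_convex_combination[of \<nu>2 \<nu>1 "1 - u"] \<nu> u(2,3) by simp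
    moreover have "\<nu>1 = point_eval k"
      using eq_point_eval_if_convex_combination \<nu> u(2-4) by simp
    ultimately show False using u(1) by simp
  qed
qed

lemma mult_functional_multiplicative:
  fixes \<mu> :: "('k::topological_space \<Rightarrow>\<^sub>C real) \<Rightarrow>\<^sub>L real"
  assumes central: "\<And>\<psi>. (\<And>t. 0 \<le> apply_bcontfun \<psi> t \<and> apply_bcontfun \<psi> t \<le> 1) \<Longrightarrow>
      \<exists>c. mult_functional \<mu> \<psi> = c *\<^sub>R \<mu>"
  shows "blinfun_apply \<mu> (bcontfun_mult \<psi> \<phi>) * blinfun_apply \<mu> (const_bcontfun 1) =
    blinfun_apply \<mu> \<psi> * blinfun_apply \<mu> \<phi>"
proof -
  \<comment> \<open>\<open>\<psi>\<close> is an affine combination of the constant \<open>1\<close> and a function with values in \<open>[0, 1]\<close>\<close>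
  define d where "d = 2 * norm \<psi> + 2"
  have "d > 0" by (simp add: d_def add_nonneg_pos)
  define \<psi>0 where "\<psi>0 = (1 / d) *\<^sub>R \<psi> + (1 / 2) *\<^sub>R const_bcontfun 1"
  have "0 \<le> apply_bcontfun \<psi>0 t \<and> apply_bcontfun \<psi>0 t \<le> 1" for t
    using abs_apply_bcontfun_le[of \<psi> t] \<open>d > 0\<close> by (simp add: \<psi>0_def d_def abs_le_iff field_simps)
  then obtain c where c: "mult_functional \<mu> \<psi>0 = c *\<^sub>R \<mu>" using central by blast
  have \<psi>_eq: "\<psi> = d *\<^sub>R \<psi>0 + (- d / 2) *\<^sub>R const_bcontfun 1"
    using \<open>d > 0\<close> by (intro bcontfun_eqI) (simp add: \<psi>0_def algebra_simps)
  have M: "mult_functional \<mu> \<psi> = (d * c - d / 2) *\<^sub>R \<mu>"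
    unfolding \<psi>_eq mult_functional_add mult_functional_scaleR mult_functional_one c
    by (simp add: algebra_simps)
  have M_apply: "blinfun_apply \<mu> (bcontfun_mult \<psi> g) = (d * c - d / 2) * blinfun_apply \<mu> g" for g
    using arg_cong[OF M, of "\<lambda>M. blinfun_apply M g"] by (simp add: scaleR_blinfun.rep_eq)
  have "bcontfun_mult \<psi> (const_bcontfun 1) = \<psi>" by (rule bcontfun_eqI) simp
  then show ?thesis using M_apply[of "const_bcontfun 1"] by (simp add: M_apply)
qed

lemma multiplicative_functional_common_zero:
  fixes \<mu> :: "('k::topological_space \<Rightarrow>\<^sub>C real) \<Rightarrow>\<^sub>L real"
  assumes K: "compact (UNIV :: 'k set)" and one: "blinfun_apply \<mu> (const_bcontfun 1) \<noteq> 0"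
    and mult: "\<And>\<psi> \<phi>. blinfun_apply \<mu> (bcontfun_mult \<psi> \<phi>) * blinfun_apply \<mu> (const_bcontfun 1) =
      blinfun_apply \<mu> \<psi> * blinfun_apply \<mu> \<phi>"
  shows "\<exists>k. \<forall>\<phi>. blinfun_apply \<mu> \<phi> = 0 \<longrightarrow> apply_bcontfun \<phi> k = 0"
proof (rule ccontr)
  assume "\<nexists>k. \<forall>\<phi>. blinfun_apply \<mu> \<phi> = 0 \<longrightarrow> apply_bcontfun \<phi> k = 0"
  then obtain \<theta> where \<theta>: "\<And>k. blinfun_apply \<mu> (\<theta> k) = 0" "\<And>k. apply_bcontfun (\<theta> k) k \<noteq> 0"
    by metis
  \<comment> \<open>by compactness finitely many \<open>\<theta> k\<^sup>2\<close> add up to a positive, hence invertible, function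
    in the kernel of \<open>\<mu>\<close>\<close>
  have "open {t. apply_bcontfun (\<theta> k) t \<noteq> 0}" for k
    by (rule open_Collect_neq) auto
  moreover have "UNIV \<subseteq> (\<Union>k\<in>UNIV. {t. apply_bcontfun (\<theta> k) t \<noteq> 0})"
    using \<theta>(2) by blast
  ultimately obtain F where "finite F" and F: "UNIV \<subseteq> (\<Union>k\<in>F. {t. apply_bcontfun (\<theta> k) t \<noteq> 0})"
    by (rule compactE_image[OF K]) blast
  define g where "g = (\<Sum>k\<in>F. bcontfun_mult (\<theta> k) (\<theta> k))"
  have "blinfun_apply \<mu> (bcontfun_mult (\<theta> k) (\<theta> k)) = 0" for k
    using mult[of "\<theta> k" "\<theta> k"] \<theta>(1) one by simp
  then have \<mu>_g: "blinfun_apply \<mu> g = 0" by (simp add: g_def blinfun.sum_right)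
  have "apply_bcontfun g t > 0" for t
  proof -
    obtain k where "k \<in> F" "apply_bcontfun (\<theta> k) t \<noteq> 0" using F by blast
    then show ?thesis
      unfolding g_def apply_bcontfun_sum by (intro sum_pos2[OF \<open>finite F\<close>]) (auto simp: zero_less_mult_iff)
  qed
  then obtain h where "bcontfun_mult g h = const_bcontfun 1"
    using bcontfun_mult_inverse_exists[OF K, of g] by (auto simp: less_le)
  then show False using mult[of g h] \<mu>_g one by simp
qed

lemma multiplicative_functional_eq_point_eval:
  fixes \<mu> :: "('k::topological_space \<Rightarrow>\<^sub>C real) \<Rightarrow>\<^sub>L real"
  assumes K: "compact (UNIV :: 'k set)" and "\<mu> \<noteq> 0"
    and mult: "\<And>\<psi> \<phi>. blinfun_apply \<mu> (bcontfun_mult \<psi> \<phi>) * blinfun_apply \<mu> (const_bcontfun 1) =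
      blinfun_apply \<mu> \<psi> * blinfun_apply \<mu> \<phi>"
  shows "\<exists>k. \<mu> = blinfun_apply \<mu> (const_bcontfun 1) *\<^sub>R point_eval k"
proof -
  define a where "a = blinfun_apply \<mu> (const_bcontfun 1)"
  have "a \<noteq> 0"
  proof
    assume "a = 0"
    then have "blinfun_apply \<mu> \<phi> = 0" for \<phi> using mult[of \<phi> \<phi>] by (simp flip: a_def)
    then have "\<mu> = 0" by (intro blinfun_eqI) simp
    with \<open>\<mu> \<noteq> 0\<close> show False ..
  qed
  then obtain k where k: "\<And>\<phi>. blinfun_apply \<mu> \<phi> = 0 \<Longrightarrow> apply_bcontfun \<phi> k = 0"
    using multiplicative_functional_common_zero[OF K _ mult] unfolding a_def by blast
  have "\<mu> = a *\<^sub>R point_eval k"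
  proof (rule blinfun_eqI)
    fix \<phi>
    have "blinfun_apply \<mu> (a *\<^sub>R \<phi> - blinfun_apply \<mu> \<phi> *\<^sub>R const_bcontfun 1) = 0"
      by (simp add: blinfun.diff_right blinfun.scaleR_right flip: a_def)
    then show "blinfun_apply \<mu> \<phi> = blinfun_apply (a *\<^sub>R point_eval k) \<phi>"
      using k by (fastforce simp: scaleR_blinfun.rep_eq)
  qed
  then show ?thesis unfolding a_def by blast
qed

section \<open>Extreme points of the dual ball\<close>

lemma F_T_eq_dual_map: "F_T T k = dual_map T (point_eval k)"
  by (simp add: F_T_def dual_map_def)

lemma F_T_apply: "U_embedding T \<Longrightarrow> blinfun_apply (F_T T k) x = apply_bcontfun (T x) k"
  by (simp add: F_T_eq_dual_map dual_map_apply U_embedding_bounded_linear)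

lemma norm_F_T_le: "U_embedding T \<Longrightarrow> norm (F_T T k) \<le> 1"
  using norm_dual_map_le[OF U_embedding_bounded_linear, of T "point_eval k"]
  by (simp add: F_T_eq_dual_map U_embedding_norm)

lemma continuous_map_F_T: "U_embedding T \<Longrightarrow> continuous_map euclidean weak_star (F_T T)"
  by (rule continuous_map_into_weak_star) (simp add: F_T_apply)

lemma closedin_weak_star_range_F_T:
  fixes T :: "'a::real_normed_vector \<Rightarrow> ('k::topological_space \<Rightarrow>\<^sub>C real)"
  assumes "compact (UNIV :: 'k set)" and "U_embedding T"
  shows "closedin weak_star (range (F_T T))"
  using assms
  by (intro compactin_imp_closedin[OF Hausdorff_space_weak_star] image_compactin[OF _ continuous_map_F_T])
    simp_all

lemma weak_star_closure_of_F_T_image_subset: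
  fixes T :: "'a::real_normed_vector \<Rightarrow> ('k::topological_space \<Rightarrow>\<^sub>C real)"
  assumes "compact (UNIV :: 'k set)" and "U_embedding T"
  shows "weak_star closure_of (F_T T ` A) \<subseteq> range (F_T T)"
  using closure_of_minimal[OF _ closedin_weak_star_range_F_T[OF assms], of "F_T T ` A"] by blast

lemma U_extension_F_T:
  assumes "U_embedding T" and "norm (F_T T k) = 1"
  shows "U_extension T (F_T T k) = point_eval k"
  using assms by (intro U_extension_unique[symmetric]) (simp_all add: F_T_eq_dual_map)

lemma F_T_extreme_point_of_face:
  assumes UE: "U_embedding T" and x: "norm x = 1" and k: "apply_bcontfun (T x) k = 1"
  shows "F_T T k extreme_point_of face x"
proof -
  let ?f = "F_T T k"
  have fx: "blinfun_apply ?f x = 1" using k by (simp add: F_T_apply[OF UE])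
  have norm_f: "norm ?f = 1"
    using norm_F_T_le[OF UE, of k] norm_blinfun[of ?f x] fx x by simp
  have "?f \<notin> open_segment a b" if ab: "a \<in> face x" "b \<in> face x" for a b
  proof
    assume "?f \<in> open_segment a b"
    then obtain u where u: "a \<noteq> b" "0 < u" "u < 1" "?f = (1 - u) *\<^sub>R a + u *\<^sub>R b"
      by (auto simp: in_segment)
    let ?\<nu>a = "U_extension T a" and ?\<nu>b = "U_extension T b"
    have norms: "norm ?\<nu>a = 1" "norm ?\<nu>b = 1"
      using ab by (simp_all add: norm_U_extension[OF UE] face_def)
    have "(1 - u) *\<^sub>R ?\<nu>a + u *\<^sub>R ?\<nu>b = U_extension T ?f"
    proof (rule U_extension_unique[OF UE])
      show "dual_map T ((1 - u) *\<^sub>R ?\<nu>a + u *\<^sub>R ?\<nu>b) = ?f"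
        using UE by (simp add: u(4) dual_map_add dual_map_scaleR U_embedding_bounded_linear dual_map_U_extension)
      show "norm ((1 - u) *\<^sub>R ?\<nu>a + u *\<^sub>R ?\<nu>b) \<le> norm ?f"
        using norm_triangle_ineq[of "(1 - u) *\<^sub>R ?\<nu>a" "u *\<^sub>R ?\<nu>b"] norms u(2,3) norm_f by simp
    qed
    then have "point_eval k \<notin> open_segment ?\<nu>a ?\<nu>b \<Longrightarrow> ?\<nu>a = ?\<nu>b"
      using U_extension_F_T[OF UE norm_f] u(2,3) by (auto simp: in_segment)
    then have "?\<nu>a = ?\<nu>b"
      using point_eval_extreme_point[of k] norms by (auto simp: extreme_point_of_def)
    then have "a = b" by (metis dual_map_U_extension[OF UE])
    with u(1) show False ..
  qed
  moreover have "?f \<in> face x" using norm_f fx by (simp add: face_def)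
  ultimately show ?thesis by (simp add: extreme_point_of_def)
qed

lemma mult_functional_U_extension:
  fixes T :: "'a::real_normed_vector \<Rightarrow> ('k::topological_space \<Rightarrow>\<^sub>C real)"
  assumes UE: "U_embedding T" and e: "e extreme_point_of cball 0 1" "norm e = 1"
    and \<psi>: "\<And>t. 0 \<le> apply_bcontfun \<psi> t \<and> apply_bcontfun \<psi> t \<le> 1"
  shows "\<exists>c. mult_functional (U_extension T e) \<psi> = c *\<^sub>R U_extension T e"
proof -
  let ?\<mu> = "U_extension T e"
  let ?M1 = "mult_functional ?\<mu> \<psi>" and ?M2 = "mult_functional ?\<mu> (const_bcontfun 1 - \<psi>)"
  have bl: "bounded_linear T" using UE by (rule U_embedding_bounded_linear)
  have "?M1 + ?M2 = ?\<mu>" by (simp flip: mult_functional_add)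
  then have restr: "e = dual_map T ?M1 + dual_map T ?M2"
    using dual_map_add[OF bl, of ?M1 ?M2] dual_map_U_extension[OF UE] by simp
  have "norm ?M1 + norm ?M2 \<le> 1"
    using norm_mult_functional_complement_le[OF \<psi>, of ?\<mu>] norm_U_extension[OF UE] e(2) by simp
  moreover have "norm (dual_map T ?M1) \<le> norm ?M1" "norm (dual_map T ?M2) \<le> norm ?M2"
    using norm_dual_map_le[OF bl] U_embedding_norm[OF UE] by simp_all
  moreover have "1 \<le> norm (dual_map T ?M1) + norm (dual_map T ?M2)"
    using restr e(2) norm_triangle_ineq[of "dual_map T ?M1" "dual_map T ?M2"] by simp
  ultimately have "norm (dual_map T ?M1) = norm ?M1"
    and "norm (dual_map T ?M1) + norm (dual_map T ?M2) \<le> 1"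
    by linarith+
  then have "dual_map T ?M1 = norm ?M1 *\<^sub>R e"
    using extreme_point_of_cball_decompose[OF e restr] by simp
  then have "?M1 = U_extension T (norm ?M1 *\<^sub>R e)"
    using e(2) by (intro U_extension_unique[OF UE]) simp_all
  then show ?thesis by (auto simp: U_extension_scaleR[OF UE])
qed

lemma extreme_point_dual_ball_eq_F_T:
  fixes T :: "'a::real_normed_vector \<Rightarrow> ('k::topological_space \<Rightarrow>\<^sub>C real)"
  assumes K: "compact (UNIV :: 'k set)" and UE: "U_embedding T"
    and e: "e \<in> ext_set dual_ball"
  shows "\<exists>k. e = F_T T k \<or> e = - F_T T k"
proof (cases "\<exists>v :: 'a \<Rightarrow>\<^sub>L real. v \<noteq> 0")
  case False
  then have "e = 0" "F_T T undefined = 0" by blast+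
  then show ?thesis by metis
next
  case True
  then obtain v :: "'a \<Rightarrow>\<^sub>L real" where "v \<noteq> 0" by blast
  have e_ext: "e extreme_point_of cball 0 1" using e by (simp add: ext_set_def dual_ball_def)
  then have norm_e: "norm e = 1" using \<open>v \<noteq> 0\<close> by (rule extreme_point_of_cball_norm_eq_1)
  define \<mu> where "\<mu> = U_extension T e"
  have "norm \<mu> = 1" using norm_e by (simp add: \<mu>_def norm_U_extension[OF UE])
  then have "\<mu> \<noteq> 0" by auto
  have "\<exists>c. mult_functional \<mu> \<psi> = c *\<^sub>R \<mu>"
    if "\<And>t. 0 \<le> apply_bcontfun \<psi> t \<and> apply_bcontfun \<psi> t \<le> 1" for \<psi>
    unfolding \<mu>_def using UE e_ext norm_e that by (rule mult_functional_U_extension)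
  then have "blinfun_apply \<mu> (bcontfun_mult \<psi> \<phi>) * blinfun_apply \<mu> (const_bcontfun 1) =
      blinfun_apply \<mu> \<psi> * blinfun_apply \<mu> \<phi>" for \<psi> \<phi>
    by (rule mult_functional_multiplicative)
  then obtain k where k: "\<mu> = blinfun_apply \<mu> (const_bcontfun 1) *\<^sub>R point_eval k"
    using multiplicative_functional_eq_point_eval[OF K \<open>\<mu> \<noteq> 0\<close>] by blast
  define c where "c = blinfun_apply \<mu> (const_bcontfun 1)"
  have "\<bar>c\<bar> = 1" using arg_cong[OF k, of norm] \<open>norm \<mu> = 1\<close> by (simp add: c_def)
  moreover have "e = c *\<^sub>R F_T T k"
    using dual_map_U_extension[OF UE, of e] arg_cong[OF k, of "dual_map T"]
    by (simp add: \<mu>_def c_def F_T_eq_dual_map dual_map_scaleR U_embedding_bounded_linear[OF UE])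
  ultimately show ?thesis by (cases "c \<ge> 0") auto
qed

lemma ext_set_dual_ball_eq_F_T_image:
  fixes T :: "'a::real_normed_vector \<Rightarrow> ('k::topological_space \<Rightarrow>\<^sub>C real)"
  assumes "compact (UNIV :: 'k set)" and "U_embedding T"
  defines "S \<equiv> F_T T ` {k. F_T T k \<in> ext_set dual_ball}"
  shows "ext_set dual_ball = S \<union> uminus ` S"
proof -
  have uminus_ext: "- f \<in> ext_set dual_ball" if "f \<in> ext_set dual_ball" for f :: "'a \<Rightarrow>\<^sub>L real"
    using that extreme_point_of_cball_uminus by (auto simp: ext_set_def dual_ball_def)
  show ?thesis
  proof
    show "ext_set dual_ball \<subseteq> S \<union> uminus ` S"
    proof
      fix e :: "'a \<Rightarrow>\<^sub>L real" assume e: "e \<in> ext_set dual_ball"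
      then obtain k where "e = F_T T k \<or> e = - F_T T k"
        using extreme_point_dual_ball_eq_F_T[OF assms(1,2)] by blast
      then show "e \<in> S \<union> uminus ` S"
        using e uminus_ext[OF e] unfolding S_def by (auto intro: image_eqI[of _ uminus "- e"])
    qed
    show "S \<union> uminus ` S \<subseteq> ext_set dual_ball" using uminus_ext by (auto simp: S_def)
  qed
qed

lemma antipodal_free_if_subset_range_F_T:
  assumes UE: "U_embedding T" and E: "E \<subseteq> range (F_T T)"
  shows "E \<inter> uminus ` E \<inter> sphere 0 1 = {}"
proof (rule ccontr)
  assume "E \<inter> uminus ` E \<inter> sphere 0 1 \<noteq> {}"
  then obtain f where f: "f \<in> E" "- f \<in> E" "norm f = 1" by force
  then obtain k k' where "f = F_T T k" "- f = F_T T k'" using E by blast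
  then have k: "norm (F_T T k) = 1" and k': "F_T T k = - F_T T k'"
    using f(3) by (auto simp: equation_minus_iff)
  have "- point_eval k' = U_extension T (F_T T k)"
    using UE k k' by (intro U_extension_unique)
      (simp_all add: dual_map_uminus U_embedding_bounded_linear F_T_eq_dual_map)
  then have "- point_eval k' = point_eval k" using U_extension_F_T[OF UE k] by simp
  from arg_cong[OF this, of "\<lambda>\<nu>. blinfun_apply \<nu> (const_bcontfun 1)"] show False
    by (simp add: blinfun.minus_left)
qed

lemma face_inter_eq_closure_ext_face_if_subset_range_F_T:
  assumes UE: "U_embedding T" and E: "E \<subseteq> range (F_T T)" and x: "norm x = 1"
  shows "E \<inter> face x = E \<inter> weak_star closure_of (ext_set (face x))"
proof
  show "E \<inter> face x \<subseteq> E \<inter> weak_star closure_of (ext_set (face x))"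
  proof
    fix f assume f: "f \<in> E \<inter> face x"
    then obtain k where k: "f = F_T T k" using E by blast
    then have "apply_bcontfun (T x) k = 1" using f by (simp add: face_def F_T_apply[OF UE])
    then have "f \<in> ext_set (face x)"
      using F_T_extreme_point_of_face[OF UE x] k by (simp add: ext_set_def)
    then show "f \<in> E \<inter> weak_star closure_of (ext_set (face x))"
      using f closure_of_subset[of "ext_set (face x)" weak_star] by auto
  qed
  have "ext_set (face x) \<subseteq> {g. blinfun_apply g x = 1}"
    by (auto simp: ext_set_def face_def extreme_point_of_def)
  then have "weak_star closure_of (ext_set (face x)) \<subseteq> {g. blinfun_apply g x = 1}"
    by (rule closure_of_minimal[OF _ closedin_weak_star_eval_eq])
  moreover have "norm f = 1" if "f \<in> E" "blinfun_apply f x = 1" for f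
  proof -
    have "norm f \<le> 1" using that(1) E norm_F_T_le[OF UE] by blast
    then show ?thesis using that(2) norm_blinfun[of f x] x by simp
  qed
  ultimately show "E \<inter> weak_star closure_of (ext_set (face x)) \<subseteq> E \<inter> face x"
    by (auto simp: face_def)
qed

theorem proposition4p7:
  fixes T :: "'a::banach \<Rightarrow> ('k::t2_space \<Rightarrow>\<^sub>C real)"
  assumes "compact (UNIV :: 'k set)"
    and "U_embedding T"
  shows "proper_U_suitable
           (weak_star closure_of (F_T T ` {k. F_T T k \<in> ext_set dual_ball}))"
proof -
  define S where "S = F_T T ` {k. F_T T k \<in> ext_set dual_ball}"
  have range: "weak_star closure_of S \<subseteq> range (F_T T)"
    unfolding S_def by (rule weak_star_closure_of_F_T_image_subset[OF assms])
  then have ball: "weak_star closure_of S \<subseteq> dual_ball"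
    using norm_F_T_le[OF assms(2)] by (auto simp: dual_ball_def)
  have "ext_set dual_ball = S \<union> uminus ` S"
    unfolding S_def by (rule ext_set_dual_ball_eq_F_T_image[OF assms])
  then have closure_ext:
    "weak_star closure_of S \<union> uminus ` (weak_star closure_of S) = weak_star closure_of (ext_set dual_ball)"
    by (simp add: homeomorphic_map_closure_of[OF homeomorphic_map_weak_star_uminus])
  show ?thesis
    unfolding proper_U_suitable_def U_suitable_def S_def[symmetric]
    using ball closure_ext antipodal_free_if_subset_range_F_T[OF assms(2) range]
      face_inter_eq_closure_ext_face_if_subset_range_F_T[OF assms(2) range]
    by simp
qed

end
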